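(* Let $(\Omega,\mathfrak S,\mathbb P,\{T_z:z\in\mathcal G\})$ be a measurable ergodic dynamical system, $\ell\ge0$, and let $g:\Omega\times\mathcal R^\ell\to\mathbb R$ be measurable with $g\in\mathcal L$. Then for $\mathbb P$-a.e. $\omega$ \[\limsup_{n\to\infty}\frac1n\log E_0\big[e^{nR_n^{1,\ell}(g)}\big]\le\sup_{\xi\in\mathcal U\cap\mathbb Q^d}\limsup_{n\to\infty}\frac1n\log E_0\big[e^{nR_n^{1,\ell}(g)}1\{X_n=\hat x_n(\xi)\}\big].\]
   Context: Fix $d$, finite $\mathcal R\subset\mathbb Z^d$, $\mathcal G$ the additive subgroup generated by $\mathcal R$; $T_z$ ($z\in\mathcal G$) measurable commuting bijections with $T_{x+y}=T_xT_y$, $T_0=\mathrm{id}$, $\mathbb P$ invariant and ergodic. $P_0,E_0$: random walk $X_n$ from $0$ with i.i.d. steps $Z_k=X_k-X_{k-1}$ uniform on $\mathcal R$; $Z_{i,j}=(Z_i,\dots,Z_j)$. $nR_n^{1,\ell}(g)=\sum_{k=0}^{n-1}g(T_{X_k}\omega,Z_{k+1,k+\ell})$. $D_n=\{z_1+\dots+z_n:z_{1,n}\in\mathcal R^n\}$, $D_0=\{0\}$. Class $\mathcal L$: $h:\Omega\to\mathbb R$ with $h\in L^1(\mathbb P)$ and, for each nonzero $z\in\mathcal R$, a.s. $\limsup_{\varepsilon\to0}\limsup_n\max_{x\in\cup_{k\le n}D_k}\frac1n\sum_{0\le i\le\varepsilon n}|h\circ T_{x+iz}|=0$; $g$ on $\Omega\times\mathcal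 R^\ell$ is in $\mathcal L$ if each $g(\cdot,z_{1,\ell})$ is. $\mathcal U$ is the convex hull of $\mathcal R$ in $\mathbb R^d$. For each rational $\xi\in\mathcal U$ a positive integer $b(\xi)$ with $b(\xi)\xi\in D_{b(\xi)}$ is fixed, and a path $(\hat x_n(\xi))_{n\ge0}$ with $\hat x_0(\xi)=0$, $\hat x_n(\xi)-\hat x_{n-1}(\xi)\in\mathcal R$, and $\hat x_{jb(\xi)}(\xi)=jb(\xi)\xi$ for all $j\ge0$. *)

theory Defs
  imports "HOL-Probability.Probability"
begin

definition rvec :: "int ^ 'd \<Rightarrow> real ^ 'd" where
  "rvec x = (\<chi> i. real_of_int (x $ i))"

text \<open>Additive subgroup generated by R (R finite).\<close>
definition gen_group :: "(int ^ 'd) set \<Rightarrow> (int ^ 'd) set" where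
  "gen_group R = {\<Sum>r\<in>R. c r *s r | c. True}"

definition paths :: "(int ^ 'd) set \<Rightarrow> nat \<Rightarrow> (int ^ 'd) list set" where
  "paths R m = {zs. set zs \<subseteq> R \<and> length zs = m}"

definition Dset :: "(int ^ 'd) set \<Rightarrow> nat \<Rightarrow> (int ^ 'd) set" where
  "Dset R n = sum_list ` paths R n"

definition walkX :: "(int ^ 'd) list \<Rightarrow> nat \<Rightarrow> int ^ 'd" where
  "walkX zs k = sum_list (take k zs)"

text \<open>E_0 of a function of the first m steps: uniform average over R^m.\<close>
definition E0 :: "(int ^ 'd) set \<Rightarrow> nat \<Rightarrow> ((int ^ 'd) list \<Rightarrow> real) \<Rightarrow> real" where
  "E0 R m F = (\<Sum>zs\<in>paths R m. F zs) / real (card R) ^ m"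

text \<open>n R_n^{1,l}(g) = sum_{k<n} g(T_{X_k} \<omega>, Z_{k+1,k+l}).\<close>
definition nRn :: "(int ^ 'd \<Rightarrow> 'a \<Rightarrow> 'a) \<Rightarrow> ('a \<Rightarrow> (int ^ 'd) list \<Rightarrow> real) \<Rightarrow> nat
    \<Rightarrow> nat \<Rightarrow> 'a \<Rightarrow> (int ^ 'd) list \<Rightarrow> real" where
  "nRn T g l n \<omega> zs = (\<Sum>k<n. g (T (walkX zs k) \<omega>) (take l (drop k zs)))"

definition nlog :: "nat \<Rightarrow> real \<Rightarrow> ereal" where
  "nlog n a = (if a = 0 then -\<infinity> else ereal (ln a / real n))"

definition classL1 :: "'a measure \<Rightarrow> (int ^ 'd) set \<Rightarrow> (int ^ 'd \<Rightarrow> 'a \<Rightarrow> 'a)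
    \<Rightarrow> ('a \<Rightarrow> real) \<Rightarrow> bool" where
  "classL1 M R T h \<longleftrightarrow> integrable M h \<and>
     (\<forall>z\<in>R. z \<noteq> 0 \<longrightarrow>
       (AE \<omega> in M.
         Limsup (at_right (0::real)) (\<lambda>\<epsilon>. Limsup sequentially (\<lambda>n.
           ereal (Max ((\<lambda>x. (1 / real n) * (\<Sum>i\<in>{i::nat. real i \<le> \<epsilon> * real n}.
                 \<bar>h (T (x + int i *s z) \<omega>)\<bar>)) ` (\<Union>k\<le>n. Dset R k))))) = 0))"

definition classL :: "'a measure \<Rightarrow> (int ^ 'd) set \<Rightarrow> (int ^ 'd \<Rightarrow> 'a \<Rightarrow> 'a)
    \<Rightarrow> nat \<Rightarrow> ('a \<Rightarrow> (int ^ 'd) list \<Rightarrow> real) \<Rightarrow> bool" where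
  "classL M R T l g \<longleftrightarrow> (\<forall>zs\<in>paths R l. classL1 M R T (\<lambda>\<omega>. g \<omega> zs))"

definition ergodic_system :: "'a measure \<Rightarrow> (int ^ 'd) set \<Rightarrow> (int ^ 'd \<Rightarrow> 'a \<Rightarrow> 'a) \<Rightarrow> bool" where
  "ergodic_system M G T \<longleftrightarrow> prob_space M \<and>
     (\<forall>z\<in>G. T z \<in> measurable M M \<and> bij_betw (T z) (space M) (space M) \<and> distr M M (T z) = M) \<and>
     (\<forall>x\<in>G. \<forall>y\<in>G. \<forall>\<omega>\<in>space M. T (x + y) \<omega> = T x (T y \<omega>)) \<and>
     (\<forall>\<omega>\<in>space M. T 0 \<omega> = \<omega>) \<and>
     (\<forall>A\<in>sets M. (\<forall>z\<in>G. T z -` A \<inter> space M = A) \<longrightarrow> measure M A = 0 \<or> measure M A = 1)"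

definition rational_vec :: "real ^ 'd \<Rightarrow> bool" where
  "rational_vec \<xi> \<longleftrightarrow> (\<forall>i. \<xi> $ i \<in> \<rat>)"

end

theory Submission
  imports Defs "HOL-Real_Asymp.Real_Asymp"
begin

text \<open>Fix \<open>\<omega>\<close>; only the environment \<open>\<phi> y w = g (T y \<omega>) w\<close> matters, and membership of \<open>g\<close> in
  \<open>\<L>\<close> says that for almost every \<open>\<omega>\<close> the sums of \<open>|\<phi>|\<close> along straight segments of length \<open>\<epsilon>n\<close>
  starting in the range of the walk are at most \<open>\<delta>(\<epsilon>) n\<close> for large \<open>n\<close>, with \<open>\<delta>(\<epsilon>) \<rightarrow> 0\<close>.

  The free partition function at time \<open>n\<close> is at most \<open>|D\<^sub>n| \<le> (n+1)^|R|\<close> times the contribution of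
  the paths ending at its heaviest endpoint \<open>x = \<Sum> a\<^sub>r r\<close>. Rounding the frequencies \<open>a\<^sub>r/n\<close> to a
  grid of mesh \<open>1/K\<close> gives a rational direction \<open>\<xi>\<close> in the hull of \<open>R\<close> and a slightly later
  time \<open>m\<close>, a multiple of the period of \<open>\<xi>\<close>, with \<open>x\<^sub>m(\<xi>) = \<Sum> f\<^sub>r r\<close> and \<open>f\<^sub>r \<ge> a\<^sub>r\<close>. Every path
  ending at \<open>x\<close> is injected into a path of length \<open>m\<close> ending at \<open>x\<^sub>m(\<xi>)\<close> by prepending the surplus
  zero steps and inserting, after step \<open>n\<close>, straight segments of \<open>f\<^sub>r - a\<^sub>r\<close> steps \<open>r\<close>; by the
  \<open>\<L>\<close>-condition this costs \<open>o(n)\<close> energy. Since the grid is finite, the pinned limits in finitely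
  many directions control the free one.\<close>

lemma paths_finite: "finite R \<Longrightarrow> finite (paths R m)"
  unfolding paths_def using finite_lists_length_eq by auto

lemma paths_nonempty: "R \<noteq> {} \<Longrightarrow> paths R m \<noteq> {}"
proof -
  assume "R \<noteq> {}"
  then obtain r where "r \<in> R" by auto
  then have "replicate m r \<in> paths R m" by (auto simp: paths_def)
  then show ?thesis by auto
qed

lemma Dset_finite: "finite R \<Longrightarrow> finite (Dset R m)"
  unfolding Dset_def by (simp add: paths_finite)

lemma Dset_nonempty: "R \<noteq> {} \<Longrightarrow> Dset R n \<noteq> {}"
  unfolding Dset_def using paths_nonempty by auto

lemma walkX_append_le: "k \<le> length p \<Longrightarrow> walkX (p @ ys) k = walkX p k"
  by (simp add: walkX_def)

lemma walkX_append: "walkX (p @ ys) (length p + k) = sum_list p + walkX ys k"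
  by (simp add: walkX_def)

lemma walkX_in_Dset: "xs \<in> paths R N \<Longrightarrow> k \<le> N \<Longrightarrow> walkX xs k \<in> Dset R k"
  unfolding Dset_def walkX_def paths_def
  by (rule imageI) (auto dest: in_set_takeD)

lemma window_in_paths: "set xs \<subseteq> R \<Longrightarrow> k + l \<le> length xs \<Longrightarrow> take l (drop k xs) \<in> paths R l"
  unfolding paths_def by (auto dest!: in_set_takeD in_set_dropD)

lemma sum_list_replicate_vec: "sum_list (replicate e r) = int e *s (r :: int ^ 'd)"
  by (simp add: sum_list_replicate vec_eq_iff of_nat_index)

lemma walkX_replicate_append: "j \<le> e \<Longrightarrow> walkX (replicate e r @ ys) j = int j *s r"
  by (simp add: walkX_def min_def sum_list_replicate_vec)

lemma Dset_add_segment: "x \<in> Dset R k \<Longrightarrow> r \<in> R \<Longrightarrow> x + int e *s r \<in> Dset R (k + e)"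
proof -
  assume "x \<in> Dset R k" "r \<in> R"
  then obtain xs where xs: "xs \<in> paths R k" "x = sum_list xs" unfolding Dset_def by auto
  have "xs @ replicate e r \<in> paths R (k + e)" using xs \<open>r \<in> R\<close> by (auto simp: paths_def)
  moreover have "sum_list (xs @ replicate e r) = x + int e *s r"
    using xs by (simp add: sum_list_replicate_vec)
  ultimately show ?thesis unfolding Dset_def by (metis image_eqI)
qed

lemma sum_list_eq_sum_count:
  "finite R \<Longrightarrow> set xs \<subseteq> R \<Longrightarrow> sum_list xs = (\<Sum>r\<in>R. int (count (mset xs) r) *s r)"
proof (induction xs)
  case Nil then show ?case by simp
next
  case (Cons x xs)
  then have IH: "sum_list xs = (\<Sum>r\<in>R. int (count (mset xs) r) *s r)" by auto
  have "(\<Sum>r\<in>R. int (count (mset (x # xs)) r) *s r)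
      = (\<Sum>r\<in>R. int (count (mset xs) r) *s r + (if x = r then r else 0))"
    by (rule sum.cong) auto
  also have "\<dots> = sum_list xs + x" using Cons.prems by (simp add: sum.distrib IH)
  finally show ?case by (simp add: add.commute)
qed

lemma length_eq_sum_count:
  "finite R \<Longrightarrow> set xs \<subseteq> R \<Longrightarrow> length xs = (\<Sum>r\<in>R. count (mset xs) r)"
proof (induction xs)
  case Nil then show ?case by simp
next
  case (Cons x xs)
  then have IH: "length xs = (\<Sum>r\<in>R. count (mset xs) r)" by auto
  have "(\<Sum>r\<in>R. count (mset (x # xs)) r) = (\<Sum>r\<in>R. count (mset xs) r + (if x = r then 1 else 0))"
    by (rule sum.cong) auto
  also have "\<dots> = length xs + 1" using Cons.prems by (simp add: sum.distrib IH)
  finally show ?case by simp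
qed

lemma card_Dset_le: "finite R \<Longrightarrow> card (Dset R n) \<le> (n + 1) ^ card R"
proof -
  assume fR: "finite R"
  let ?f = "\<lambda>a. (\<Sum>r\<in>R. int (a r) *s r)"
  have "Dset R n \<subseteq> ?f ` (PiE R (\<lambda>_. {..n}))"
  proof
    fix x assume "x \<in> Dset R n"
    then obtain xs where xs: "set xs \<subseteq> R" "length xs = n" "x = sum_list xs"
      unfolding Dset_def paths_def by auto
    let ?a = "restrict (count (mset xs)) R"
    have "count (mset xs) r \<le> n" if "r \<in> R" for r
      using length_eq_sum_count[OF fR xs(1)] xs(2) member_le_sum[of r R "count (mset xs)"] fR that
      by auto
    then have "?a \<in> PiE R (\<lambda>_. {..n})" by auto
    moreover have "x = ?f ?a" using sum_list_eq_sum_count[OF fR xs(1)] xs(3)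
      by (auto intro: sum.cong)
    ultimately show "x \<in> ?f ` (PiE R (\<lambda>_. {..n}))" by blast
  qed
  then have "card (Dset R n) \<le> card (?f ` (PiE R (\<lambda>_. {..n})))"
    by (intro card_mono finite_imageI finite_PiE) (auto simp: fR)
  also have "\<dots> \<le> card (PiE R (\<lambda>_. {..n}::nat set))"
    by (rule card_image_le) (auto simp: fR intro: finite_PiE)
  also have "\<dots> = (n + 1) ^ card R" by (simp add: card_PiE fR)
  finally show ?thesis .
qed

lemma ln_card_Dset_le:
  assumes "finite R" "R \<noteq> {}"
  shows "ln (real (card (Dset R n))) \<le> real (card R) * ln (real n + 1)"
proof -
  have "real (card (Dset R n)) \<le> (real n + 1) ^ card R"
    using card_Dset_le[OF assms(1), of n] by (metis of_nat_1 of_nat_add of_nat_le_iff of_nat_power)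
  moreover have "0 < card (Dset R n)"
    using Dset_finite[OF assms(1)] Dset_nonempty[OF assms(2)] by (simp add: card_gt_0_iff)
  ultimately show ?thesis by (simp flip: ln_realpow)
qed

lemma sum_lessThan_add:
  "(\<Sum>k<a + b. f k) = (\<Sum>k<a. f k) + (\<Sum>k<b. f (a + k))" for f :: "nat \<Rightarrow> 'b::comm_monoid_add"
  by (induction b) (auto simp: ac_simps)

definition path_energy :: "(int ^ 'd \<Rightarrow> (int ^ 'd) list \<Rightarrow> real) \<Rightarrow> nat \<Rightarrow> nat \<Rightarrow> (int ^ 'd) list \<Rightarrow> real"
  where "path_energy \<phi> l n zs = (\<Sum>k<n. \<phi> (walkX zs k) (take l (drop k zs)))"

definition window_mass :: "(int ^ 'd) set \<Rightarrow> nat \<Rightarrow> (int ^ 'd \<Rightarrow> (int ^ 'd) list \<Rightarrow> real) \<Rightarrow> int ^ 'd \<Rightarrow> real"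
  where "window_mass R l \<phi> y = (\<Sum>w\<in>paths R l. \<bar>\<phi> y w\<bar>)"

lemma window_mass_nonneg: "0 \<le> window_mass R l \<phi> y"
  unfolding window_mass_def by (rule sum_nonneg) auto

lemma abs_le_window_mass: "finite R \<Longrightarrow> w \<in> paths R l \<Longrightarrow> \<bar>\<phi> y w\<bar> \<le> window_mass R l \<phi> y"
  unfolding window_mass_def by (rule member_le_sum[of w _ "\<lambda>w. \<bar>\<phi> y w\<bar>"]) (auto simp: paths_finite)

lemma path_energy_append:
  "path_energy \<phi> l (length p + N) (p @ ys)
     = path_energy \<phi> l (length p) (p @ ys) + path_energy (\<lambda>y. \<phi> (sum_list p + y)) l N ys"
  unfolding path_energy_def sum_lessThan_add by (simp add: walkX_append)

lemma path_energy_ge: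
  assumes "finite R" "set xs \<subseteq> R" "N + l \<le> length xs"
  shows "- (\<Sum>k<N. window_mass R l \<phi> (walkX xs k)) \<le> path_energy \<phi> l N xs"
proof -
  have "- window_mass R l \<phi> (walkX xs k) \<le> \<phi> (walkX xs k) (take l (drop k xs))" if "k < N" for k
    using abs_le_window_mass[OF assms(1) window_in_paths[OF assms(2)], of k l \<phi> "walkX xs k"]
      that assms(3) by linarith
  then show ?thesis unfolding path_energy_def sum_negf[symmetric] by (intro sum_mono) auto
qed

text \<open>Only the at most \<open>l\<close> windows reaching beyond the common prefix can differ.\<close>

lemma path_energy_common_prefix:
  assumes fR: "finite R" and xs: "set xs \<subseteq> R" "length xs = n + l"
    and ys: "set ys \<subseteq> R" "n + l \<le> length ys" and prefix: "take n ys = take n xs"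
    and B: "\<And>k. k < n \<Longrightarrow> n < k + l \<Longrightarrow> window_mass R l \<phi> (walkX xs k) \<le> B" and B0: "0 \<le> B"
  shows "path_energy \<phi> l n xs \<le> path_energy \<phi> l n ys + 2 * real l * B"
proof -
  let ?H = "\<lambda>zs k. \<phi> (walkX zs k) (take l (drop k zs))"
  have walk: "walkX ys k = walkX xs k" if "k \<le> n" for k
    using prefix that by (metis walkX_def min.absorb1 take_take)
  have "?H xs k - ?H ys k \<le> (if n < k + l then 2 * B else 0)" if "k < n" for k
  proof (cases "n < k + l")
    case True
    have "\<bar>?H xs k\<bar> \<le> B" "\<bar>?H ys k\<bar> \<le> B"
      using abs_le_window_mass[OF fR window_in_paths] B[OF that True] walk[of k] that xs ys
      by (metis less_imp_le order_trans add_le_mono le_refl)+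
    then show ?thesis using True by auto
  next
    case False
    then have "take l (drop k ys) = take l (drop k xs)"
      by (metis prefix add.commute le_add_diff_inverse2 not_less take_drop take_take min.absorb1)
    then show ?thesis using walk[of k] that False by simp
  qed
  then have "(\<Sum>k<n. ?H xs k - ?H ys k) \<le> (\<Sum>k<n. if n < k + l then 2 * B else 0)"
    by (intro sum_mono) auto
  also have "\<dots> = 2 * B * real (card {k\<in>{..<n}. n < k + l})"
    by (simp add: sum.If_cases Int_def conj_commute)
  also have "\<dots> \<le> 2 * B * real l"
  proof -
    have "{k\<in>{..<n}. n < k + l} \<subseteq> {n - l..<n}" by auto
    then have "card {k\<in>{..<n}. n < k + l} \<le> l"
      by (metis card_atLeastLessThan card_mono diff_diff_cancel diff_le_self
          finite_atLeastLessThan le_trans nat_le_linear)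
    then show ?thesis using B0 by (simp add: mult_left_mono)
  qed
  finally show ?thesis by (simp add: path_energy_def sum_subtractf algebra_simps)
qed

definition insert_route :: "nat \<Rightarrow> (int ^ 'd) list \<Rightarrow> nat \<Rightarrow> (int ^ 'd) list \<Rightarrow> (int ^ 'd) list"
  where "insert_route e0 rt n zs = replicate e0 0 @ take n zs @ rt @ drop n zs"

lemma insert_route_in_paths:
  assumes "zs \<in> paths R (n + l)" "rt \<in> paths R q" "0 < e0 \<Longrightarrow> 0 \<in> R"
  shows "insert_route e0 rt n zs \<in> paths R (e0 + n + q + l)"
  using assms by (cases "e0 = 0") (auto simp: insert_route_def paths_def dest: in_set_takeD in_set_dropD)

lemma walkX_insert_route:
  assumes "length zs = n + l" "length rt = q"
  shows "walkX (insert_route e0 rt n zs) (e0 + n + q) = walkX zs n + sum_list rt"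
  using assms walkX_append[of "replicate e0 0" "take n zs @ rt @ drop n zs" "n + q"]
  by (simp add: insert_route_def walkX_def sum_list_replicate_vec add.assoc)

lemma inj_on_insert_route:
  assumes "length rt = q"
  shows "inj_on (insert_route e0 rt n) (paths R (n + l))"
proof (rule inj_onI)
  fix xs ys assume "xs \<in> paths R (n + l)" "ys \<in> paths R (n + l)" and eq: "insert_route e0 rt n xs = insert_route e0 rt n ys"
  then have "length xs = n + l" "length ys = n + l" by (auto simp: paths_def)
  moreover have "take n (drop e0 (insert_route e0 rt n zs)) = take n zs" "drop (e0 + n + q) (insert_route e0 rt n zs) = drop n zs"
    if "length zs = n + l" for zs
    using that assms by (simp_all add: insert_route_def)
  ultimately have "take n xs = take n ys" "drop n xs = drop n ys" using eq by metis+
  then show "xs = ys" by (metis append_take_drop_id)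
qed

lemma path_energy_insert_route:
  assumes fR: "finite R" and zs: "zs \<in> paths R (n + l)" and rt: "rt \<in> paths R q"
    and zero: "0 < e0 \<Longrightarrow> 0 \<in> R"
    and B: "\<And>k. k < n \<Longrightarrow> n < k + l \<Longrightarrow> window_mass R l \<phi> (walkX zs k) \<le> B" and B0: "0 \<le> B"
    and Q: "(\<Sum>k<q. window_mass R l \<phi> (walkX zs n + walkX rt k)) \<le> Q"
  shows "path_energy \<phi> l n zs
           \<le> path_energy \<phi> l (e0 + n + q) (insert_route e0 rt n zs) + real e0 * window_mass R l \<phi> 0 + 2 * real l * B + Q"
proof -
  define rest where "rest = take n zs @ rt @ drop n zs"
  have lzs: "length zs = n + l" and szs: "set zs \<subseteq> R" using zs by (auto simp: paths_def)
  have lrt: "length rt = q" and srt: "set rt \<subseteq> R" using rt by (auto simp: paths_def)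
  have srest: "set rest \<subseteq> R" and lrest: "length rest = n + q + l"
    using szs srt lzs lrt by (auto simp: rest_def dest: in_set_takeD in_set_dropD)
  have sxs: "set (insert_route e0 rt n zs) \<subseteq> R" and lxs: "length (insert_route e0 rt n zs) = e0 + n + q + l"
    using insert_route_in_paths[OF zs rt zero] by (auto simp: paths_def)
  have "path_energy \<phi> l (e0 + (n + q)) (insert_route e0 rt n zs)
      = path_energy \<phi> l e0 (insert_route e0 rt n zs) + path_energy \<phi> l (n + q) rest"
    using path_energy_append[of \<phi> l "replicate e0 0" "n + q" rest]
    by (simp add: insert_route_def rest_def sum_list_replicate_vec)
  moreover have "- (real e0 * window_mass R l \<phi> 0) \<le> path_energy \<phi> l e0 (insert_route e0 rt n zs)"
  proof -
    have "walkX (insert_route e0 rt n zs) k = 0" if "k < e0" for k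
      using that walkX_replicate_append[of k e0 0] by (simp add: insert_route_def)
    then show ?thesis using path_energy_ge[OF fR sxs, of e0 l \<phi>] lxs by simp
  qed
  moreover have "path_energy \<phi> l (n + q) rest
      = path_energy \<phi> l n rest + path_energy (\<lambda>y. \<phi> (walkX zs n + y)) l q (rt @ drop n zs)"
    using path_energy_append[of \<phi> l "take n zs" q "rt @ drop n zs"] lzs
    by (simp add: rest_def walkX_def)
  moreover have "- Q \<le> path_energy (\<lambda>y. \<phi> (walkX zs n + y)) l q (rt @ drop n zs)"
  proof -
    have "walkX (rt @ drop n zs) k = walkX rt k" if "k < q" for k
      using that lrt by (simp add: walkX_append_le)
    then have "(\<Sum>k<q. window_mass R l (\<lambda>y. \<phi> (walkX zs n + y)) (walkX (rt @ drop n zs) k)) \<le> Q"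
      using Q by (simp add: window_mass_def)
    moreover have "- (\<Sum>k<q. window_mass R l (\<lambda>y. \<phi> (walkX zs n + y)) (walkX (rt @ drop n zs) k))
        \<le> path_energy (\<lambda>y. \<phi> (walkX zs n + y)) l q (rt @ drop n zs)"
      using srt szs lrt lzs by (intro path_energy_ge[OF fR]) (auto dest: in_set_dropD)
    ultimately show ?thesis by linarith
  qed
  moreover have "path_energy \<phi> l n zs \<le> path_energy \<phi> l n rest + 2 * real l * B"
    using lzs lrest by (intro path_energy_common_prefix[OF fR szs lzs srest _ _ B B0]) (auto simp: rest_def)
  ultimately show ?thesis by (simp add: add.assoc)
qed

lemma sum_endpoint_le_sum_pinned:
  assumes fR: "finite R" and zero: "0 < e0 \<Longrightarrow> 0 \<in> R" and rt: "rt \<in> paths R q"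
    and B: "\<And>zs k. zs \<in> paths R (n + l) \<Longrightarrow> k < n \<Longrightarrow> window_mass R l \<phi> (walkX zs k) \<le> B"
    and B0: "0 \<le> B"
    and Q: "(\<Sum>k<q. window_mass R l \<phi> (x + walkX rt k)) \<le> Q"
  shows "(\<Sum>zs\<in>{zs\<in>paths R (n + l). walkX zs n = x}. exp (path_energy \<phi> l n zs))
     \<le> exp (real e0 * window_mass R l \<phi> 0 + 2 * real l * B + Q) *
        (\<Sum>zs\<in>paths R (e0 + n + q + l). exp (path_energy \<phi> l (e0 + n + q) zs)
           * (if walkX zs (e0 + n + q) = x + sum_list rt then 1 else 0))"
proof -
  define A where "A = {zs\<in>paths R (n + l). walkX zs n = x}"
  define C where "C = real e0 * window_mass R l \<phi> 0 + 2 * real l * B + Q"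
  let ?m = "e0 + n + q" and ?\<Phi> = "insert_route e0 rt n"
  have lr: "length rt = q" using rt by (simp add: paths_def)
  have "exp (path_energy \<phi> l n zs) \<le> exp C * exp (path_energy \<phi> l ?m (?\<Phi> zs))" if "zs \<in> A" for zs
  proof -
    have zs: "zs \<in> paths R (n + l)" "walkX zs n = x" using that by (auto simp: A_def)
    have "path_energy \<phi> l n zs
        \<le> path_energy \<phi> l ?m (?\<Phi> zs) + real e0 * window_mass R l \<phi> 0 + 2 * real l * B + Q"
      using zs B Q by (intro path_energy_insert_route[OF fR zs(1) rt zero _ B0]) auto
    then show ?thesis by (simp flip: exp_add add: C_def add.commute add.left_commute)
  qed
  then have "(\<Sum>zs\<in>A. exp (path_energy \<phi> l n zs)) \<le> exp C * (\<Sum>zs\<in>A. exp (path_energy \<phi> l ?m (?\<Phi> zs)))"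
    by (simp add: sum_distrib_left sum_mono)
  also have "(\<Sum>zs\<in>A. exp (path_energy \<phi> l ?m (?\<Phi> zs)))
      = (\<Sum>w\<in>?\<Phi> ` A. exp (path_energy \<phi> l ?m w) * (if walkX w ?m = x + sum_list rt then 1 else 0))"
  proof -
    have "inj_on ?\<Phi> A" using inj_on_insert_route[OF lr] by (rule inj_on_subset) (auto simp: A_def)
    moreover have "walkX (?\<Phi> zs) ?m = x + sum_list rt" if "zs \<in> A" for zs
      using that walkX_insert_route[OF _ lr] by (auto simp: A_def paths_def)
    ultimately show ?thesis by (simp add: sum.reindex)
  qed
  also have "\<dots> \<le> (\<Sum>w\<in>paths R (?m + l). exp (path_energy \<phi> l ?m w) * (if walkX w ?m = x + sum_list rt then 1 else 0))"
    using insert_route_in_paths[OF _ rt zero] by (intro sum_mono2) (auto simp: paths_finite fR A_def)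
  finally show ?thesis by (simp add: A_def C_def mult_left_mono)
qed

definition route :: "(int ^ 'd) list \<Rightarrow> (int ^ 'd \<Rightarrow> nat) \<Rightarrow> (int ^ 'd) list"
  where "route rs e = concat (map (\<lambda>r. replicate (e r) r) rs)"

lemma route_Cons: "route (r # rs) e = replicate (e r) r @ route rs e"
  by (simp add: route_def)

lemma length_route: "length (route rs e) = sum_list (map e rs)"
  by (induction rs) (auto simp: route_def)

lemma set_route_subset: "set (route rs e) \<subseteq> set rs"
  by (auto simp: route_def)

lemma sum_list_route: "sum_list (route rs e) = sum_list (map (\<lambda>r. int (e r) *s r) rs)"
  by (induction rs) (auto simp: route_def sum_list_replicate_vec)

definition ray_bounded :: "(int ^ 'd) set \<Rightarrow> (int ^ 'd \<Rightarrow> real) \<Rightarrow> real \<Rightarrow> real \<Rightarrow> nat \<Rightarrow> bool"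
  where "ray_bounded R G \<epsilon> B m \<longleftrightarrow> (\<forall>y\<in>(\<Union>k\<le>m. Dset R k). \<forall>z\<in>R - {0}. \<forall>e.
           real e \<le> \<epsilon> * real m \<longrightarrow> (\<Sum>i<e. G (y + int i *s z)) \<le> B)"

lemma ray_bounded_point:
  assumes "ray_bounded R G \<epsilon> B m" "y \<in> (\<Union>k\<le>m. Dset R k)" "z \<in> R - {0}" "1 \<le> \<epsilon> * real m"
  shows "G y \<le> B"
proof -
  have "real (1::nat) \<le> \<epsilon> * real m" using assms(4) by simp
  then have "(\<Sum>i<1. G (y + int i *s z)) \<le> B"
    using assms(1-3) unfolding ray_bounded_def by blast
  then show ?thesis by simp
qed

lemma route_sum_le:
  assumes ray: "ray_bounded R G \<epsilon> B m"
    and rs: "set rs \<subseteq> R - {0}" "\<forall>r\<in>set rs. real (e r) \<le> \<epsilon> * real m"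
  shows "x \<in> Dset R k \<Longrightarrow> k + length (route rs e) \<le> m \<Longrightarrow>
     (\<Sum>j<length (route rs e). G (x + walkX (route rs e) j)) \<le> real (length rs) * B"
  using rs
proof (induction rs arbitrary: x k)
  case Nil then show ?case by (simp add: route_def)
next
  case (Cons r rs)
  let ?rep = "replicate (e r) r" and ?rt = "route rs e"
  have "(\<Sum>j<length (route (r # rs) e). G (x + walkX (route (r # rs) e) j))
      = (\<Sum>j<e r. G (x + walkX (?rep @ ?rt) j)) + (\<Sum>j<length ?rt. G (x + walkX (?rep @ ?rt) (e r + j)))"
    unfolding route_Cons by (simp add: sum_lessThan_add)
  also have "(\<Sum>j<e r. G (x + walkX (?rep @ ?rt) j)) = (\<Sum>j<e r. G (x + int j *s r))"
    by (rule sum.cong) (auto simp: walkX_replicate_append)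
  also have "(\<Sum>j<length ?rt. G (x + walkX (?rep @ ?rt) (e r + j)))
       = (\<Sum>j<length ?rt. G ((x + int (e r) *s r) + walkX ?rt j))"
    using walkX_append[of ?rep ?rt] by (simp add: sum_list_replicate_vec add.assoc)
  also have "(\<Sum>j<e r. G (x + int j *s r)) \<le> B"
  proof -
    have "x \<in> (\<Union>k\<le>m. Dset R k)" "r \<in> R - {0}" "real (e r) \<le> \<epsilon> * real m"
      using Cons.prems by (auto simp: route_Cons)
    then show ?thesis using ray unfolding ray_bounded_def by blast
  qed
  also have "(\<Sum>j<length ?rt. G ((x + int (e r) *s r) + walkX ?rt j)) \<le> real (length rs) * B"
    using Cons.prems by (intro Cons.IH[of _ "k + e r"] Dset_add_segment) (auto simp: route_Cons)
  finally show ?case by (simp add: algebra_simps)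
qed

lemma rvec_add: "rvec (x + y) = rvec x + rvec y"
  by (simp add: rvec_def vec_eq_iff)

lemma rvec_zero: "rvec 0 = 0"
  by (simp add: rvec_def vec_eq_iff)

lemma rvec_smult: "rvec (c *s x) = real_of_int c *\<^sub>R rvec x"
  by (simp add: rvec_def vec_eq_iff)

lemma rvec_sum: "rvec (\<Sum>r\<in>A. f r) = (\<Sum>r\<in>A. rvec (f r))"
  by (induction A rule: infinite_finite_induct) (auto simp: rvec_zero rvec_add)

lemma rvec_inj: "rvec x = rvec y \<Longrightarrow> x = y"
  by (simp add: rvec_def vec_eq_iff)

definition rat_hull :: "(int ^ 'd) set \<Rightarrow> (real ^ 'd) set"
  where "rat_hull R = {\<xi>. rational_vec \<xi> \<and> \<xi> \<in> convex hull (rvec ` R)}"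

text \<open>A grid point \<open>j\<close> stands for the step frequencies \<open>j r / K\<close>; the shift by 2 keeps every
  barycentric weight of \<open>grid_dir R j\<close> positive and leaves room for rounding the frequencies down.\<close>

definition grid_weight :: "(int ^ 'd) set \<Rightarrow> (int ^ 'd \<Rightarrow> nat) \<Rightarrow> nat"
  where "grid_weight R j = (\<Sum>r\<in>R. j r + 2)"

definition grid_dir :: "(int ^ 'd) set \<Rightarrow> (int ^ 'd \<Rightarrow> nat) \<Rightarrow> real ^ 'd"
  where "grid_dir R j = (\<Sum>r\<in>R. (real (j r + 2) / real (grid_weight R j)) *\<^sub>R rvec r)"

lemma grid_weight_pos: "finite R \<Longrightarrow> R \<noteq> {} \<Longrightarrow> 0 < grid_weight R j"
  by (simp add: grid_weight_def sum_pos)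

lemma grid_dir_in_rat_hull:
  assumes fR: "finite R" and R: "R \<noteq> {}"
  shows "grid_dir R j \<in> rat_hull R"
proof -
  have "rational_vec (grid_dir R j)" unfolding rational_vec_def grid_dir_def
    by (auto simp: rvec_def intro!: Rats_sum Rats_mult Rats_divide)
  moreover have "(\<Sum>r\<in>R. real (j r + 2) / real (grid_weight R j)) = 1"
  proof -
    have "(\<Sum>r\<in>R. real (j r + 2) / real (grid_weight R j)) = (\<Sum>r\<in>R. real (j r + 2)) / real (grid_weight R j)"
      by (simp only: sum_divide_distrib)
    also have "(\<Sum>r\<in>R. real (j r + 2)) = real (grid_weight R j)"
      by (simp only: grid_weight_def of_nat_sum)
    finally show ?thesis using grid_weight_pos[OF fR R, of j] by simp
  qed
  then have "grid_dir R j \<in> convex hull (rvec ` R)" unfolding grid_dir_def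
    by (intro convex_sum fR convex_convex_hull) (auto intro: hull_inc)
  ultimately show ?thesis by (simp add: rat_hull_def)
qed

lemma grid_dir_counts:
  assumes fR: "finite R" and R: "R \<noteq> {}"
    and ray: "\<And>i. rvec (xhat (i * p)) = real (i * p) *\<^sub>R grid_dir R j"
    and m: "m = grid_weight R j * p * t"
  shows "(\<Sum>r\<in>R. int ((j r + 2) * (m div grid_weight R j)) *s r) = xhat m"
    and "(\<Sum>r\<in>R. (j r + 2) * (m div grid_weight R j)) = m"
proof -
  define J where "J = grid_weight R j"
  have J: "0 < J" using grid_weight_pos[OF fR R] by (simp add: J_def)
  have mJ: "m div J = p * t" using m J by (simp add: J_def)
  have "(\<Sum>r\<in>R. (j r + 2) * (m div J)) = (\<Sum>r\<in>R. j r + 2) * (p * t)"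
    by (simp only: mJ sum_distrib_right)
  also have "\<dots> = J * (p * t)" by (simp add: J_def grid_weight_def)
  finally have "(\<Sum>r\<in>R. (j r + 2) * (m div J)) = J * (p * t)" .
  then show "(\<Sum>r\<in>R. (j r + 2) * (m div grid_weight R j)) = m"
    using m by (simp add: J_def mult.assoc)
  have "rvec (\<Sum>r\<in>R. int ((j r + 2) * (m div J)) *s r)
      = (\<Sum>r\<in>R. real ((j r + 2) * (m div J)) *\<^sub>R rvec r)"
    unfolding rvec_sum rvec_smult by simp
  also have "\<dots> = (\<Sum>r\<in>R. real m *\<^sub>R ((real (j r + 2) / real J) *\<^sub>R rvec r))"
  proof (rule sum.cong)
    fix r
    have "real ((j r + 2) * (m div J)) = real m * (real (j r + 2) / real J)"
      using J m by (simp add: mJ J_def field_simps)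
    then show "real ((j r + 2) * (m div J)) *\<^sub>R rvec r = real m *\<^sub>R ((real (j r + 2) / real J) *\<^sub>R rvec r)"
      by simp
  qed simp
  also have "\<dots> = real (J * t * p) *\<^sub>R grid_dir R j"
    using m by (simp add: grid_dir_def scaleR_sum_right J_def ac_simps)
  also have "\<dots> = rvec (xhat m)" using ray[of "J * t"] m by (simp add: J_def ac_simps)
  finally show "(\<Sum>r\<in>R. int ((j r + 2) * (m div grid_weight R j)) *s r) = xhat m"
    by (simp add: J_def rvec_inj)
qed

lemma real_div_le: "0 < n \<Longrightarrow> real (x div n) \<le> real x / real n"
proof -
  assume n: "0 < n"
  have "x div n * n \<le> x" using div_mult_mod_eq[of x n] by linarith
  then have "real (x div n * n) \<le> real x" by (simp only: of_nat_le_iff)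
  then show ?thesis using n by (simp add: pos_le_divide_eq)
qed

lemma real_div_gt: "0 < n \<Longrightarrow> real x / real n < real (x div n) + 1"
proof -
  assume n: "0 < n"
  have "x < x div n * n + n" using div_mult_mod_eq[of x n] mod_less_divisor[OF n, of x] by linarith
  then have "real x < (real (x div n) + 1) * real n"
    by (simp add: algebra_simps) (metis of_nat_add of_nat_less_iff of_nat_mult)
  then show ?thesis using n by (simp add: pos_divide_less_eq)
qed

lemma next_multiple_bounds:
  assumes "0 < K" "0 < L"
  shows "real N / real K < real (L * (N div (K * L) + 1))"
    and "real (L * (N div (K * L) + 1)) \<le> real N / real K + real L"
proof -
  have eq: "real N / real K = real L * (real N / real (K * L))" using assms by simp
  have "real L * (real N / real (K * L)) < real L * (real (N div (K * L)) + 1)"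
    using real_div_gt[of "K * L" N] assms by (intro mult_strict_left_mono) auto
  then show "real N / real K < real (L * (N div (K * L) + 1))"
    unfolding eq by (simp add: algebra_simps)
  have "real L * real (N div (K * L)) \<le> real L * (real N / real (K * L))"
    using real_div_le[of "K * L" N] assms by (intro mult_left_mono) auto
  then show "real (L * (N div (K * L) + 1)) \<le> real N / real K + real L"
    unfolding eq by (simp add: algebra_simps)
qed

text \<open>The surplus zero steps are only counted (\<open>e0\<close>): they will be prepended to a path,
  whereas the surplus nonzero steps are inserted as the straight segments of a route.\<close>

lemma route_between_counts:
  assumes fR: "finite R" and le: "\<And>r. r \<in> R \<Longrightarrow> a r \<le> f r"
  obtains e0 rs e where "0 < e0 \<Longrightarrow> 0 \<in> R" "set rs \<subseteq> R - {0}" "length rs \<le> card R"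
    "(\<Sum>r\<in>R. int (a r) *s r) + sum_list (route rs e) = (\<Sum>r\<in>R. int (f r) *s r)"
    "(\<Sum>r\<in>R. f r) = e0 + (\<Sum>r\<in>R. a r) + length (route rs e)"
    "\<forall>r\<in>set rs. e r \<le> (\<Sum>r\<in>R. f r) - (\<Sum>r\<in>R. a r)"
proof -
  obtain rs where rs: "set rs = R - {0}" "distinct rs" using finite_distinct_list[of "R - {0}"] fR by auto
  define e where "e r = f r - a r" for r
  define e0 where "e0 = (if 0 \<in> R then e 0 else 0)"
  have fae: "f r = a r + e r" if "r \<in> R" for r using le[OF that] by (simp add: e_def)
  have len: "length (route rs e) = (\<Sum>r\<in>R - {0}. e r)"
    using rs by (simp add: length_route sum_list_distinct_conv_sum_set)
  have esum: "(\<Sum>r\<in>R. e r) = e0 + length (route rs e)"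
    using fR by (simp add: len e0_def sum.remove[of R 0])
  have fsum: "(\<Sum>r\<in>R. f r) = (\<Sum>r\<in>R. a r) + (\<Sum>r\<in>R. e r)"
    by (simp add: fae sum.distrib)
  have e_le: "e r \<le> (\<Sum>r\<in>R. e r)" if "r \<in> R" for r using member_le_sum[of r R e] fR that by auto
  have "sum_list (route rs e) = (\<Sum>r\<in>R. int (e r) *s r)"
    using rs fR by (simp add: sum_list_route sum_list_distinct_conv_sum_set sum_diff1)
  then have "(\<Sum>r\<in>R. int (a r) *s r) + sum_list (route rs e) = (\<Sum>r\<in>R. int (a r) *s r + int (e r) *s r)"
    by (simp add: sum.distrib)
  also have "\<dots> = (\<Sum>r\<in>R. int (f r) *s r)"
    by (rule sum.cong) (auto simp: fae vector_sadd_rdistrib)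
  finally have "(\<Sum>r\<in>R. int (a r) *s r) + sum_list (route rs e) = (\<Sum>r\<in>R. int (f r) *s r)" .
  moreover have "length rs \<le> card R" using rs distinct_card[OF rs(2)] fR by (metis card_mono Diff_subset)
  moreover have "\<forall>r\<in>set rs. e r \<le> (\<Sum>r\<in>R. f r) - (\<Sum>r\<in>R. a r)"
    using rs e_le by (auto simp: fsum)
  moreover have "0 < e0 \<Longrightarrow> 0 \<in> R" by (simp add: e0_def split: if_splits)
  ultimately show thesis using rs by (intro that[of e0 rs e]) (simp_all add: fsum esum)
qed

definition segment_average ::
    "(int ^ 'd) set \<Rightarrow> (int ^ 'd \<Rightarrow> (int ^ 'd) list \<Rightarrow> real) \<Rightarrow> (int ^ 'd) list \<Rightarrow> int ^ 'd \<Rightarrow> real \<Rightarrow> nat \<Rightarrow> real"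
  where "segment_average R \<phi> w z \<epsilon> n = Max ((\<lambda>x. (1 / real n) * (\<Sum>i\<in>{i::nat. real i \<le> \<epsilon> * real n}.
      \<bar>\<phi> (x + int i *s z) w\<bar>)) ` (\<Union>k\<le>n. Dset R k))"

definition ray_negligible :: "(int ^ 'd) set \<Rightarrow> nat \<Rightarrow> (int ^ 'd \<Rightarrow> (int ^ 'd) list \<Rightarrow> real) \<Rightarrow> bool"
  where "ray_negligible R l \<phi> \<longleftrightarrow> (\<forall>w\<in>paths R l. \<forall>z\<in>R - {0}.
      Limsup (at_right (0::real)) (\<lambda>\<epsilon>. Limsup sequentially (\<lambda>n. ereal (segment_average R \<phi> w z \<epsilon> n))) = 0)"

lemma finite_nat_le_real: "finite {i::nat. real i \<le> c}"
proof (rule finite_subset)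
  show "{i::nat. real i \<le> c} \<subseteq> {..nat \<lceil>c\<rceil>}"
    using le_of_int_ceiling[of c] by (auto simp: le_nat_iff) linarith
qed simp

lemma sum_segment_le_average:
  assumes fR: "finite R" and y: "y \<in> (\<Union>k\<le>m. Dset R k)" and e: "real e \<le> \<epsilon> * real m" and m: "0 < m"
  shows "(\<Sum>i<e. \<bar>\<phi> (y + int i *s z) w\<bar>) \<le> real m * segment_average R \<phi> w z \<epsilon> m"
proof -
  have "(\<Sum>i<e. \<bar>\<phi> (y + int i *s z) w\<bar>) \<le> (\<Sum>i\<in>{i::nat. real i \<le> \<epsilon> * real m}. \<bar>\<phi> (y + int i *s z) w\<bar>)"
    using e by (intro sum_mono2 finite_nat_le_real) auto
  also have "\<dots> = real m * ((1 / real m) * (\<Sum>i\<in>{i::nat. real i \<le> \<epsilon> * real m}. \<bar>\<phi> (y + int i *s z) w\<bar>))"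
    using m by simp
  also have "\<dots> \<le> real m * segment_average R \<phi> w z \<epsilon> m"
    unfolding segment_average_def using y by (intro mult_left_mono Max_ge finite_imageI) (auto simp: Dset_finite fR)
  finally show ?thesis .
qed

lemma ray_negligible_eventually:
  assumes fR: "finite R" and neg: "ray_negligible R l \<phi>" and \<eta>: "0 < \<eta>" and \<delta>: "0 < \<delta>"
  obtains \<epsilon> N where "0 < \<epsilon>" "\<epsilon> \<le> \<delta>"
    "\<And>n w z. N \<le> n \<Longrightarrow> w \<in> paths R l \<Longrightarrow> z \<in> R - {0} \<Longrightarrow> segment_average R \<phi> w z \<epsilon> n < \<eta>"
proof -
  define S where "S = paths R l \<times> (R - {0})"
  define A where "A \<epsilon> p = Limsup sequentially (\<lambda>n. ereal (segment_average R \<phi> (fst p) (snd p) \<epsilon> n))" for \<epsilon> p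
  have fS: "finite S" using fR by (simp add: S_def paths_finite)
  have "\<forall>p\<in>S. \<forall>\<^sub>F \<epsilon> in at_right 0. A \<epsilon> p < ereal \<eta>"
  proof (intro ballI Limsup_lessD)
    fix p assume "p \<in> S"
    then obtain w z where "p = (w, z)" "w \<in> paths R l" "z \<in> R - {0}" by (auto simp: S_def)
    then show "Limsup (at_right 0) (\<lambda>\<epsilon>. A \<epsilon> p) < ereal \<eta>"
      using neg \<eta> by (simp add: ray_negligible_def A_def)
  qed
  then have "\<forall>\<^sub>F \<epsilon> in at_right 0. \<forall>p\<in>S. A \<epsilon> p < ereal \<eta>"
    by (rule eventually_ball_finite[OF fS])
  then obtain b where b: "0 < b" and lim: "\<And>\<epsilon>. 0 < \<epsilon> \<Longrightarrow> \<epsilon> < b \<Longrightarrow> \<forall>p\<in>S. A \<epsilon> p < ereal \<eta>"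
    unfolding eventually_at_right_field by auto
  define \<epsilon> where "\<epsilon> = min (b / 2) \<delta>"
  have \<epsilon>: "0 < \<epsilon>" "\<epsilon> \<le> \<delta>" "\<epsilon> < b" using b \<delta> by (auto simp: \<epsilon>_def)
  have "\<forall>p\<in>S. \<forall>\<^sub>F n in sequentially. segment_average R \<phi> (fst p) (snd p) \<epsilon> n < \<eta>"
  proof
    fix p assume "p \<in> S"
    then have "A \<epsilon> p < ereal \<eta>" using lim[OF \<epsilon>(1,3)] by blast
    from Limsup_lessD[OF this[unfolded A_def]]
    show "\<forall>\<^sub>F n in sequentially. segment_average R \<phi> (fst p) (snd p) \<epsilon> n < \<eta>" by simp
  qed
  then have "\<forall>\<^sub>F n in sequentially. \<forall>p\<in>S. segment_average R \<phi> (fst p) (snd p) \<epsilon> n < \<eta>"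
    by (rule eventually_ball_finite[OF fS])
  then show thesis using \<epsilon>(1,2) unfolding eventually_sequentially S_def by (auto intro: that)
qed

lemma ray_negligibleD:
  assumes fR: "finite R" and R: "R \<noteq> {}" and neg: "ray_negligible R l \<phi>" and \<eta>: "0 < \<eta>" and \<delta>: "0 < \<delta>"
  obtains \<epsilon> N where "0 < \<epsilon>" "\<epsilon> \<le> \<delta>" "\<And>m. N \<le> m \<Longrightarrow> ray_bounded R (window_mass R l \<phi>) \<epsilon> (\<eta> * real m) m"
proof -
  define P where "P = real (card (paths R l))"
  have P: "0 < P" using paths_nonempty[OF R] paths_finite[OF fR] by (simp add: P_def card_gt_0_iff)
  obtain \<epsilon> N where \<epsilon>: "0 < \<epsilon>" "\<epsilon> \<le> \<delta>"
    and avg: "\<And>n w z. N \<le> n \<Longrightarrow> w \<in> paths R l \<Longrightarrow> z \<in> R - {0} \<Longrightarrow> segment_average R \<phi> w z \<epsilon> n < \<eta> / P"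
    using ray_negligible_eventually[OF fR neg divide_pos_pos[OF \<eta> P] \<delta>] by blast
  have "ray_bounded R (window_mass R l \<phi>) \<epsilon> (\<eta> * real m) m" if m: "Suc N \<le> m" for m
    unfolding ray_bounded_def
  proof (intro ballI allI impI)
    fix y z e assume y: "y \<in> (\<Union>k\<le>m. Dset R k)" and z: "z \<in> R - {0}" and e: "real e \<le> \<epsilon> * real m"
    have "(\<Sum>i<e. \<bar>\<phi> (y + int i *s z) w\<bar>) \<le> real m * (\<eta> / P)" if w: "w \<in> paths R l" for w
    proof -
      have "segment_average R \<phi> w z \<epsilon> m \<le> \<eta> / P" using avg[of m w z] m w z by simp
      then have "real m * segment_average R \<phi> w z \<epsilon> m \<le> real m * (\<eta> / P)" by (rule mult_left_mono) simp
      then show ?thesis using sum_segment_le_average[OF fR y e, of \<phi> z w] m by simp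
    qed
    then have "(\<Sum>w\<in>paths R l. \<Sum>i<e. \<bar>\<phi> (y + int i *s z) w\<bar>) \<le> (\<Sum>w\<in>paths R l. real m * (\<eta> / P))"
      by (rule sum_mono)
    then show "(\<Sum>i<e. window_mass R l \<phi> (y + int i *s z)) \<le> \<eta> * real m"
      using P by (simp add: window_mass_def sum.swap[of _ "{..<e}"] P_def[symmetric] mult.commute)
  qed
  then show thesis using \<epsilon> by (intro that[of \<epsilon> "Suc N"])
qed

lemma grid_weight_bounds:
  fixes K :: nat
  assumes fR: "finite R" and n: "0 < n" and a: "(\<Sum>r\<in>R. a r) = n"
  defines "j \<equiv> restrict (\<lambda>r. K * a r div n) R"
  shows "real K \<le> real (grid_weight R j)" and "real (grid_weight R j) \<le> real K + 2 * real (card R)"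
proof -
  have "(\<Sum>r\<in>R. real K * real (a r) / real n) = real K * (\<Sum>r\<in>R. real (a r)) / real n"
    by (simp add: sum_divide_distrib sum_distrib_left)
  also have "(\<Sum>r\<in>R. real (a r)) = real n" using a by (metis of_nat_sum)
  finally have weights: "(\<Sum>r\<in>R. real K * real (a r) / real n) = real K" using n by simp
  have "(\<Sum>r\<in>R. real (j r)) \<le> (\<Sum>r\<in>R. real K * real (a r) / real n)"
  proof (rule sum_mono)
    fix r assume "r \<in> R"
    then show "real (j r) \<le> real K * real (a r) / real n"
      using real_div_le[OF n, of "K * a r"] by (simp add: j_def)
  qed
  moreover have "(\<Sum>r\<in>R. real K * real (a r) / real n - 1) \<le> (\<Sum>r\<in>R. real (j r))"
  proof (rule sum_mono)
    fix r assume "r \<in> R"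
    then show "real K * real (a r) / real n - 1 \<le> real (j r)"
      using real_div_gt[OF n, of "K * a r"] by (simp add: j_def)
  qed
  moreover have "real (grid_weight R j) = (\<Sum>r\<in>R. real (j r)) + 2 * real (card R)"
    by (simp add: grid_weight_def sum.distrib)
  ultimately show "real K \<le> real (grid_weight R j)" "real (grid_weight R j) \<le> real K + 2 * real (card R)"
    using weights by (simp_all add: sum_subtractf)
qed

lemma heaviest_endpoint:
  assumes fR: "finite R" and R: "R \<noteq> {}"
  obtains x a where "x \<in> Dset R n" "x = (\<Sum>r\<in>R. int (a r) *s r)" "(\<Sum>r\<in>R. a r) = n"
    "(\<Sum>zs\<in>paths R (n + l). exp (path_energy \<phi> l n zs))
       \<le> real (card (Dset R n)) * (\<Sum>zs\<in>{zs\<in>paths R (n + l). walkX zs n = x}. exp (path_energy \<phi> l n zs))"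
proof -
  define S where "S x = (\<Sum>zs\<in>{zs\<in>paths R (n + l). walkX zs n = x}. exp (path_energy \<phi> l n zs))" for x
  have D: "finite (Dset R n)" "Dset R n \<noteq> {}" using fR R by (auto simp: Dset_finite Dset_nonempty)
  have "Max (S ` Dset R n) \<in> S ` Dset R n" using D by simp
  then obtain x where x: "x \<in> Dset R n" "S x = Max (S ` Dset R n)" by auto
  have "(\<Sum>zs\<in>paths R (n + l). exp (path_energy \<phi> l n zs)) = (\<Sum>y\<in>Dset R n. S y)"
    unfolding S_def
    by (rule sum.group[symmetric]) (auto simp: paths_finite fR Dset_finite intro: walkX_in_Dset)
  also have "\<dots> \<le> real (card (Dset R n)) * S x"
    using sum_bounded_above[of "Dset R n" S "S x"] x D by simp
  finally have bound: "(\<Sum>zs\<in>paths R (n + l). exp (path_energy \<phi> l n zs)) \<le> real (card (Dset R n)) * S x" .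
  obtain u where u: "set u \<subseteq> R" "length u = n" "x = sum_list u"
    using x(1) by (auto simp: Dset_def paths_def)
  show thesis
    using u bound x(1) length_eq_sum_count[OF fR u(1)] sum_list_eq_sum_count[OF fR u(1)]
    by (intro that[of x "count (mset u)"]) (simp_all add: S_def)
qed

lemma nlog_le_iff: "0 < x \<Longrightarrow> 0 < n \<Longrightarrow> nlog n x \<le> ereal c \<longleftrightarrow> ln x \<le> c * real n"
  by (simp add: nlog_def divide_le_eq)

lemma eventually_ln_le_linear:
  assumes "0 \<le> A" "0 < B"
  shows "\<forall>\<^sub>F n in sequentially. A * ln (real n + 1) \<le> B * real n"
proof -
  have "(\<lambda>n. ln (real n + 1) / real n) \<longlonglongrightarrow> 0" by real_asymp
  then have "\<forall>\<^sub>F n in sequentially. ln (real n + 1) / real n < B / (A + 1)"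
    using assms by (intro order_tendstoD) auto
  then show ?thesis using eventually_gt_at_top[of 0]
  proof (rule eventually_elim2)
    fix n :: nat assume h: "ln (real n + 1) / real n < B / (A + 1)" and n: "0 < n"
    have "(A + 1) * ln (real n + 1) < B * real n" using h n assms by (simp add: field_simps)
    moreover have "A * ln (real n + 1) \<le> (A + 1) * ln (real n + 1)" by (simp add: mult_right_mono)
    ultimately show "A * ln (real n + 1) \<le> B * real n" by linarith
  qed
qed

definition free_partition :: "(int ^ 'd) set \<Rightarrow> nat \<Rightarrow> (int ^ 'd \<Rightarrow> (int ^ 'd) list \<Rightarrow> real) \<Rightarrow> nat \<Rightarrow> real"
  where "free_partition R l \<phi> n = E0 R (n + l) (\<lambda>zs. exp (path_energy \<phi> l n zs))"

definition pinned_partition ::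
    "(int ^ 'd) set \<Rightarrow> nat \<Rightarrow> (int ^ 'd \<Rightarrow> (int ^ 'd) list \<Rightarrow> real) \<Rightarrow> nat \<Rightarrow> int ^ 'd \<Rightarrow> real"
  where "pinned_partition R l \<phi> n x =
    E0 R (n + l) (\<lambda>zs. exp (path_energy \<phi> l n zs) * (if walkX zs n = x then 1 else 0))"

definition grid_period :: "(int ^ 'd) set \<Rightarrow> (real ^ 'd \<Rightarrow> nat) \<Rightarrow> (int ^ 'd \<Rightarrow> nat) \<Rightarrow> nat"
  where "grid_period R b j = grid_weight R j * b (grid_dir R j)"

definition grid_time :: "(int ^ 'd) set \<Rightarrow> (real ^ 'd \<Rightarrow> nat) \<Rightarrow> nat \<Rightarrow> nat \<Rightarrow> (int ^ 'd \<Rightarrow> nat) \<Rightarrow> nat"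
  where "grid_time R b K n j = grid_period R b j * (n * grid_weight R j div (K * grid_period R b j) + 1)"

lemma free_partition_pos: "finite R \<Longrightarrow> R \<noteq> {} \<Longrightarrow> 0 < free_partition R l \<phi> n"
  unfolding free_partition_def E0_def using paths_nonempty[of R "n + l"]
  by (intro divide_pos_pos sum_pos) (auto simp: paths_finite card_gt_0_iff)

lemma free_partition_eq_pinned_origin: "R = {0} \<Longrightarrow> free_partition R l \<phi> n = pinned_partition R l \<phi> n 0"
proof -
  assume R: "R = {0}"
  have zeros: "sum_list xs = 0" if "set xs \<subseteq> {0}" for xs :: "(int ^ 'd) list"
    using that by (induction xs) auto
  have "walkX zs n = 0" if "zs \<in> paths R (n + l)" for zs
    using that R unfolding walkX_def by (intro zeros) (auto simp: paths_def dest: in_set_takeD)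
  then show ?thesis
    unfolding free_partition_def pinned_partition_def E0_def by (intro arg_cong2[where f = "(/)"] sum.cong) auto
qed

lemma eventually_real_ge: "\<forall>\<^sub>F n in sequentially. C \<le> real n"
  using filterlim_real_sequentially unfolding filterlim_at_top by blast

context
  fixes R :: "(int ^ 'd) set" and b :: "real ^ 'd \<Rightarrow> nat" and xhat :: "real ^ 'd \<Rightarrow> nat \<Rightarrow> int ^ 'd"
  assumes finite_R: "finite R" and R_nonempty: "R \<noteq> {}"
    and b_pos: "\<And>\<xi>. \<xi> \<in> rat_hull R \<Longrightarrow> 0 < b \<xi>"
    and xhat_ray: "\<And>\<xi> i. \<xi> \<in> rat_hull R \<Longrightarrow> rvec (xhat \<xi> (i * b \<xi>)) = real (i * b \<xi>) *\<^sub>R \<xi>"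
    and xhat_0: "\<And>\<xi>. \<xi> \<in> rat_hull R \<Longrightarrow> xhat \<xi> 0 = 0"
    and xhat_step: "\<And>\<xi> n. \<xi> \<in> rat_hull R \<Longrightarrow> xhat \<xi> (Suc n) - xhat \<xi> n \<in> R"
begin

text \<open>The step frequencies \<open>a r / n\<close> are rounded down to the grid of mesh \<open>1 / K\<close>; the time
  \<open>m \<ge> n\<close> is the next multiple of the period of the resulting direction, so that the path
  \<open>xhat\<close> in that direction is at time \<open>m\<close> a nonnegative combination dominating the counts \<open>a\<close>.\<close>

lemma grid_approximation:
  assumes K: "0 < K" and n: "0 < n" and a: "(\<Sum>r\<in>R. a r) = n"
  defines "j \<equiv> restrict (\<lambda>r. K * a r div n) R"
  defines "m \<equiv> grid_time R b K n j"
  shows "j \<in> PiE R (\<lambda>_. {..K})" and "n \<le> m"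
    and "real m \<le> real n + 2 * real (card R) * real n / real K + real (grid_period R b j)"
    and "\<exists>f. (\<forall>r\<in>R. a r \<le> f r) \<and> (\<Sum>r\<in>R. f r) = m \<and> (\<Sum>r\<in>R. int (f r) *s r) = xhat (grid_dir R j) m"
proof -
  have "K * a r div n \<le> K" if "r \<in> R" for r
  proof -
    have "a r \<le> n" using member_le_sum[of r R a] finite_R that a by simp
    then have "K * a r div n \<le> K * n div n" by (intro div_le_mono) simp
    then show ?thesis using n by simp
  qed
  then show "j \<in> PiE R (\<lambda>_. {..K})" by (auto simp: j_def)
  define J where "J = grid_weight R j"
  define \<xi> where "\<xi> = grid_dir R j"
  define L where "L = grid_period R b j"
  define t where "t = n * J div (K * L) + 1"
  have \<xi>: "\<xi> \<in> rat_hull R" unfolding \<xi>_def by (rule grid_dir_in_rat_hull[OF finite_R R_nonempty])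
  have J: "0 < J" unfolding J_def by (rule grid_weight_pos[OF finite_R R_nonempty])
  have L: "0 < L" using b_pos[OF \<xi>] J by (simp add: L_def grid_period_def \<xi>_def J_def)
  have m_eq: "m = L * t" by (simp add: m_def grid_time_def L_def J_def t_def)
  have m_gt: "real n * real J / real K < real m" and m_le: "real m \<le> real n * real J / real K + real L"
    using next_multiple_bounds[OF K L, of "n * J"] by (simp_all add: m_eq t_def)
  have JK: "real K \<le> real J" "real J \<le> real K + 2 * real (card R)"
    using grid_weight_bounds[OF finite_R n a, of K] by (simp_all add: J_def j_def)
  have "real n * real K \<le> real n * real J" using JK by (simp add: mult_left_mono)
  then have "real n \<le> real n * real J / real K" using K by (simp add: le_divide_eq)
  then show "n \<le> m" using m_gt by linarith
  have "real n * real J / real K \<le> real n * (real K + 2 * real (card R)) / real K"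
    using JK by (intro divide_right_mono mult_left_mono) auto
  then show "real m \<le> real n + 2 * real (card R) * real n / real K + real (grid_period R b j)"
    using m_le K by (simp add: L_def field_simps)
  define f where "f r = (j r + 2) * (m div J)" for r
  have "(\<Sum>r\<in>R. int (f r) *s r) = xhat \<xi> m" "(\<Sum>r\<in>R. f r) = m"
    using grid_dir_counts[OF finite_R R_nonempty, of "xhat \<xi>" "b \<xi>" j m t] xhat_ray[OF \<xi>] m_eq
    by (simp_all add: f_def J_def \<xi>_def L_def grid_period_def ac_simps)
  moreover have "a r \<le> f r" if "r \<in> R" for r
  proof -
    have "real K * real (a r) / real n < real (j r) + 2"
      using real_div_gt[OF n, of "K * a r"] that by (simp add: j_def)
    then have "real K * real (a r) < (real (j r) + 2) * real n" using n by (simp add: divide_less_eq)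
    then have "real (a r) < (real (j r) + 2) * real n / real K"
      using K by (simp add: less_divide_eq mult.commute)
    also have "\<dots> \<le> (real (j r) + 2) * (real m / real J)"
    proof -
      have "real n / real K \<le> real m / real J" using m_gt J K by (simp add: field_simps)
      then have "(real (j r) + 2) * (real n / real K) \<le> (real (j r) + 2) * (real m / real J)"
        by (intro mult_left_mono) auto
      then show ?thesis by simp
    qed
    also have "\<dots> = real (f r)"
    proof -
      have "m = J * (b \<xi> * t)" using m_eq by (simp add: L_def grid_period_def J_def \<xi>_def)
      then show ?thesis using J unfolding f_def by (simp add: algebra_simps)
    qed
    finally show ?thesis by simp
  qed
  ultimately show "\<exists>f. (\<forall>r\<in>R. a r \<le> f r) \<and> (\<Sum>r\<in>R. f r) = m \<and> (\<Sum>r\<in>R. int (f r) *s r) = xhat (grid_dir R j) m"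
    by (auto simp: \<xi>_def)
qed

lemma grid_route:
  assumes K: "0 < K" and n: "0 < n" and a: "(\<Sum>r\<in>R. a r) = n"
  obtains j m e0 rs e where "j \<in> PiE R (\<lambda>_. {..K})" "n \<le> m"
    "real m \<le> real n + 2 * real (card R) * real n / real K + real (grid_period R b j)"
    "0 < e0 \<Longrightarrow> 0 \<in> R" "set rs \<subseteq> R - {0}" "length rs \<le> card R"
    "(\<Sum>r\<in>R. int (a r) *s r) + sum_list (route rs e) = xhat (grid_dir R j) m"
    "m = e0 + n + length (route rs e)" "\<forall>r\<in>set rs. e r \<le> m - n"
proof -
  define j where "j = restrict (\<lambda>r. K * a r div n) R"
  define m where "m = grid_time R b K n j"
  note G = grid_approximation[OF K n a, folded j_def, folded m_def]
  obtain f where f: "\<forall>r\<in>R. a r \<le> f r" "(\<Sum>r\<in>R. f r) = m" "(\<Sum>r\<in>R. int (f r) *s r) = xhat (grid_dir R j) m"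
    using G(4) by blast
  obtain e0 rs e where E: "0 < e0 \<Longrightarrow> 0 \<in> R" "set rs \<subseteq> R - {0}" "length rs \<le> card R"
    "(\<Sum>r\<in>R. int (a r) *s r) + sum_list (route rs e) = (\<Sum>r\<in>R. int (f r) *s r)"
    "(\<Sum>r\<in>R. f r) = e0 + (\<Sum>r\<in>R. a r) + length (route rs e)"
    "\<forall>r\<in>set rs. e r \<le> (\<Sum>r\<in>R. f r) - (\<Sum>r\<in>R. a r)"
    by (rule route_between_counts[OF finite_R, of a f]) (use f(1) in auto)
  show thesis
  proof (rule that[of j m e0 rs e])
    show "(\<Sum>r\<in>R. int (a r) *s r) + sum_list (route rs e) = xhat (grid_dir R j) m"
      using E(4) f(3) by simp
    show "m = e0 + n + length (route rs e)" using E(5) f(2) a by simp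
    show "\<forall>r\<in>set rs. e r \<le> m - n" using E(6) f(2) a by simp
  qed (use G(1-3) E(1-3) in auto)
qed

lemma endpoint_sum_le_pinned_sum:
  assumes K: "0 < K" and n: "0 < n" and z0: "z0 \<in> R - {0}"
    and \<epsilon>: "1 \<le> \<epsilon> * real n" and \<eta>: "0 \<le> \<eta>"
    and ray: "\<And>m. n \<le> m \<Longrightarrow> ray_bounded R (window_mass R l \<phi>) \<epsilon> (\<eta> * real m) m"
    and slack: "\<And>j. j \<in> PiE R (\<lambda>_. {..K}) \<Longrightarrow>
      2 * real (card R) * real n / real K + real (grid_period R b j) \<le> \<epsilon> * real n"
    and x: "x \<in> Dset R n" "x = (\<Sum>r\<in>R. int (a r) *s r)" and a: "(\<Sum>r\<in>R. a r) = n"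
  obtains m j where "j \<in> PiE R (\<lambda>_. {..K})" "n \<le> m" "real m - real n \<le> \<epsilon> * real n"
    "(\<Sum>zs\<in>{zs\<in>paths R (n + l). walkX zs n = x}. exp (path_energy \<phi> l n zs))
       \<le> exp ((real m - real n) * window_mass R l \<phi> 0 + (2 * real l + real (card R)) * (\<eta> * real m))
         * (\<Sum>zs\<in>paths R (m + l). exp (path_energy \<phi> l m zs) * (if walkX zs m = xhat (grid_dir R j) m then 1 else 0))"
proof -
  obtain j m e0 rs e where G: "j \<in> PiE R (\<lambda>_. {..K})" "n \<le> m"
      "real m \<le> real n + 2 * real (card R) * real n / real K + real (grid_period R b j)"
    and E: "0 < e0 \<Longrightarrow> 0 \<in> R" "set rs \<subseteq> R - {0}" "length rs \<le> card R"
      "(\<Sum>r\<in>R. int (a r) *s r) + sum_list (route rs e) = xhat (grid_dir R j) m"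
      "m = e0 + n + length (route rs e)" "\<forall>r\<in>set rs. e r \<le> m - n"
    using grid_route[OF K n a] by blast
  define q where "q = length (route rs e)"
  define B where "B = \<eta> * real m"
  have m_eq: "m = e0 + n + q" using E(5) by (simp add: q_def)
  have mn: "real m - real n \<le> \<epsilon> * real n" using G(3) slack[OF G(1)] by linarith
  have "0 < \<epsilon>"
  proof (rule ccontr)
    assume "\<not> 0 < \<epsilon>"
    then have "\<epsilon> * real n \<le> 0" by (simp add: mult_nonpos_nonneg)
    then show False using \<epsilon> by linarith
  qed
  then have \<epsilon>m: "\<epsilon> * real n \<le> \<epsilon> * real m" using G(2) by simp
  then have one_le: "1 \<le> \<epsilon> * real m" using \<epsilon> by linarith
  have ray_m: "ray_bounded R (window_mass R l \<phi>) \<epsilon> B m" using ray G(2) by (simp add: B_def)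
  have B0: "0 \<le> B" using \<eta> by (simp add: B_def)
  have point: "window_mass R l \<phi> (walkX zs k) \<le> B" if "zs \<in> paths R (n + l)" "k < n" for zs k
  proof (rule ray_bounded_point[OF ray_m _ z0 one_le])
    show "walkX zs k \<in> (\<Union>k\<le>m. Dset R k)" using walkX_in_Dset[OF that(1), of k] that(2) G(2) by auto
  qed
  have route: "route rs e \<in> paths R q" using E(2) set_route_subset[of rs e] by (auto simp: paths_def q_def)
  have "(\<Sum>k<q. window_mass R l \<phi> (x + walkX (route rs e) k)) \<le> real (length rs) * B"
    unfolding q_def
  proof (rule route_sum_le[OF ray_m E(2) _ x(1)])
    show "\<forall>r\<in>set rs. real (e r) \<le> \<epsilon> * real m"
    proof
      fix r assume "r \<in> set rs"
      then have "e r \<le> m - n" using E(6) by simp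
      then have "real (e r) \<le> real m - real n" using G(2) by (simp add: of_nat_diff)
      then show "real (e r) \<le> \<epsilon> * real m" using mn \<epsilon>m by linarith
    qed
    show "n + length (route rs e) \<le> m" using m_eq by (simp add: q_def)
  qed
  also have "\<dots> \<le> real (card R) * B" using E(3) B0 by (simp add: mult_right_mono)
  finally have Q: "(\<Sum>k<q. window_mass R l \<phi> (x + walkX (route rs e) k)) \<le> real (card R) * B" .
  have target: "x + sum_list (route rs e) = xhat (grid_dir R j) m" using E(4) x(2) by simp
  have "(\<Sum>zs\<in>{zs\<in>paths R (n + l). walkX zs n = x}. exp (path_energy \<phi> l n zs))
    \<le> exp (real e0 * window_mass R l \<phi> 0 + 2 * real l * B + real (card R) * B) *
       (\<Sum>zs\<in>paths R (m + l). exp (path_energy \<phi> l m zs) * (if walkX zs m = xhat (grid_dir R j) m then 1 else 0))"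
    using sum_endpoint_le_sum_pinned[OF finite_R E(1) route point B0 Q] unfolding target m_eq .
  also have "\<dots> \<le> exp ((real m - real n) * window_mass R l \<phi> 0 + (2 * real l + real (card R)) * (\<eta> * real m)) *
       (\<Sum>zs\<in>paths R (m + l). exp (path_energy \<phi> l m zs) * (if walkX zs m = xhat (grid_dir R j) m then 1 else 0))"
  proof (intro mult_right_mono sum_nonneg)
    have "real e0 \<le> real m - real n" using m_eq by simp
    then have "real e0 * window_mass R l \<phi> 0 \<le> (real m - real n) * window_mass R l \<phi> 0"
      by (rule mult_right_mono) (rule window_mass_nonneg)
    then show "exp (real e0 * window_mass R l \<phi> 0 + 2 * real l * B + real (card R) * B)
        \<le> exp ((real m - real n) * window_mass R l \<phi> 0 + (2 * real l + real (card R)) * (\<eta> * real m))"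
      by (simp add: B_def algebra_simps)
  qed simp
  finally show thesis using G(1,2) mn by (intro that) auto
qed

text \<open>The factor \<open>exp ((m - n) ln |R|)\<close> compensates the normalisations of \<open>E0\<close> at the two times.\<close>

lemma free_partition_le_pinned:
  assumes K: "0 < K" and n: "0 < n" and z0: "z0 \<in> R - {0}"
    and \<epsilon>: "1 \<le> \<epsilon> * real n" and \<eta>: "0 \<le> \<eta>"
    and ray: "\<And>m. n \<le> m \<Longrightarrow> ray_bounded R (window_mass R l \<phi>) \<epsilon> (\<eta> * real m) m"
    and slack: "\<And>j. j \<in> PiE R (\<lambda>_. {..K}) \<Longrightarrow>
      2 * real (card R) * real n / real K + real (grid_period R b j) \<le> \<epsilon> * real n"
  obtains m j where "j \<in> PiE R (\<lambda>_. {..K})" "n \<le> m" "real m - real n \<le> \<epsilon> * real n"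
    "free_partition R l \<phi> n \<le> real (card (Dset R n))
       * exp ((real m - real n) * (ln (real (card R)) + window_mass R l \<phi> 0) + (2 * real l + real (card R)) * (\<eta> * real m))
       * pinned_partition R l \<phi> m (xhat (grid_dir R j) m)"
proof -
  define Rc where "Rc = real (card R)"
  have Rc: "0 < Rc" using finite_R R_nonempty by (simp add: Rc_def card_gt_0_iff)
  obtain x a where x: "x \<in> Dset R n" "x = (\<Sum>r\<in>R. int (a r) *s r)" "(\<Sum>r\<in>R. a r) = n"
    and heavy: "(\<Sum>zs\<in>paths R (n + l). exp (path_energy \<phi> l n zs))
       \<le> real (card (Dset R n)) * (\<Sum>zs\<in>{zs\<in>paths R (n + l). walkX zs n = x}. exp (path_energy \<phi> l n zs))"
    using heaviest_endpoint[OF finite_R R_nonempty, where n = n and l = l and \<phi> = \<phi>] by blast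
  obtain m j where mj: "j \<in> PiE R (\<lambda>_. {..K})" "n \<le> m" "real m - real n \<le> \<epsilon> * real n"
    and endpoint: "(\<Sum>zs\<in>{zs\<in>paths R (n + l). walkX zs n = x}. exp (path_energy \<phi> l n zs))
       \<le> exp ((real m - real n) * window_mass R l \<phi> 0 + (2 * real l + real (card R)) * (\<eta> * real m))
         * (\<Sum>zs\<in>paths R (m + l). exp (path_energy \<phi> l m zs) * (if walkX zs m = xhat (grid_dir R j) m then 1 else 0))"
    using endpoint_sum_le_pinned_sum[OF K n z0 \<epsilon> \<eta> ray slack x] by blast
  define C where "C = (real m - real n) * window_mass R l \<phi> 0 + (2 * real l + real (card R)) * (\<eta> * real m)"
  define Sm where "Sm = (\<Sum>zs\<in>paths R (m + l). exp (path_energy \<phi> l m zs) * (if walkX zs m = xhat (grid_dir R j) m then 1 else 0))"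
  have pow: "Rc ^ (m + l) = Rc ^ (n + l) * exp ((real m - real n) * ln Rc)"
  proof -
    have "m + l = (n + l) + (m - n)" using mj(2) by simp
    then have "Rc ^ (m + l) = Rc ^ (n + l) * Rc ^ (m - n)" by (metis power_add)
    also have "Rc ^ (m - n) = exp ((real m - real n) * ln Rc)"
      using mj(2) Rc by (simp add: exp_of_nat_mult flip: of_nat_diff)
    finally show ?thesis .
  qed
  have "free_partition R l \<phi> n \<le> real (card (Dset R n)) * (exp C * Sm) / Rc ^ (n + l)"
    unfolding free_partition_def E0_def Rc_def[symmetric]
  proof (rule divide_right_mono)
    show "(\<Sum>zs\<in>paths R (n + l). exp (path_energy \<phi> l n zs)) \<le> real (card (Dset R n)) * (exp C * Sm)"
      using heavy mult_left_mono[OF endpoint, of "real (card (Dset R n))"] by (simp add: C_def Sm_def)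
  qed (use Rc in simp)
  also have "\<dots> = real (card (Dset R n)) * exp (C + (real m - real n) * ln Rc) * (Sm / Rc ^ (m + l))"
    unfolding pow exp_add using Rc by (simp add: field_simps)
  finally show thesis
    using mj by (intro that) (simp_all add: pinned_partition_def E0_def Sm_def C_def Rc_def algebra_simps)
qed

lemma ln_free_partition_le:
  assumes K: "0 < K" and n: "0 < n" and z0: "z0 \<in> R - {0}"
    and \<epsilon>: "1 \<le> \<epsilon> * real n" "\<epsilon> \<le> 1" and \<eta>: "0 \<le> \<eta>"
    and ray: "\<And>m. n \<le> m \<Longrightarrow> ray_bounded R (window_mass R l \<phi>) \<epsilon> (\<eta> * real m) m"
    and slack: "\<And>j. j \<in> PiE R (\<lambda>_. {..K}) \<Longrightarrow>
      2 * real (card R) * real n / real K + real (grid_period R b j) \<le> \<epsilon> * real n"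
    and pinned: "\<And>j m. j \<in> PiE R (\<lambda>_. {..K}) \<Longrightarrow> n \<le> m \<Longrightarrow>
      nlog m (pinned_partition R l \<phi> m (xhat (grid_dir R j) m)) \<le> ereal c"
  shows "ln (free_partition R l \<phi> n) \<le> ln (real (card (Dset R n))) + c * real n
    + (\<bar>c\<bar> + ln (real (card R)) + window_mass R l \<phi> 0) * (\<epsilon> * real n)
    + (2 * real l + real (card R)) * \<eta> * (2 * real n)"
proof -
  define Rc where "Rc = real (card R)"
  define G0 where "G0 = window_mass R l \<phi> 0"
  have Rc: "1 \<le> Rc" using finite_R R_nonempty by (simp add: Rc_def Suc_le_eq card_gt_0_iff)
  have G0: "0 \<le> G0" by (simp add: G0_def window_mass_nonneg)
  obtain m j where mj: "j \<in> PiE R (\<lambda>_. {..K})" "n \<le> m" "real m - real n \<le> \<epsilon> * real n"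
    and le: "free_partition R l \<phi> n \<le> real (card (Dset R n))
       * exp ((real m - real n) * (ln Rc + G0) + (2 * real l + Rc) * (\<eta> * real m))
       * pinned_partition R l \<phi> m (xhat (grid_dir R j) m)"
    using free_partition_le_pinned[OF K n z0 \<epsilon>(1) \<eta> ray slack]
    unfolding Rc_def G0_def by blast
  define d where "d = real m - real n"
  have d: "0 \<le> d" "d \<le> \<epsilon> * real n" "real m \<le> 2 * real n"
    using mj(2,3) \<epsilon>(2) mult_right_mono[OF \<epsilon>(2), of "real n"] by (auto simp: d_def)
  have free: "0 < free_partition R l \<phi> n" by (rule free_partition_pos[OF finite_R R_nonempty])
  have D: "0 < real (card (Dset R n))"
    using Dset_finite[OF finite_R] Dset_nonempty[OF R_nonempty] by (simp add: card_gt_0_iff)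
  have pin: "0 < pinned_partition R l \<phi> m (xhat (grid_dir R j) m)"
    using zero_less_mult_pos[OF order.strict_trans2[OF free le]] D by simp
  have "ln (pinned_partition R l \<phi> m (xhat (grid_dir R j) m)) \<le> c * real m"
    using pinned[OF mj(1,2)] pin n mj(2) by (simp add: nlog_le_iff)
  moreover have "ln (free_partition R l \<phi> n) \<le> ln (real (card (Dset R n)))
      + (d * (ln Rc + G0) + (2 * real l + Rc) * (\<eta> * real m)) + ln (pinned_partition R l \<phi> m (xhat (grid_dir R j) m))"
    using ln_le_cancel_iff[OF free _, THEN iffD2, OF _ le] D pin by (simp add: ln_mult d_def)
  moreover have "c * real m \<le> c * real n + \<bar>c\<bar> * d"
  proof -
    have "c * d \<le> \<bar>c\<bar> * d" using d(1) by (simp add: mult_right_mono)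
    then show ?thesis by (simp add: d_def algebra_simps)
  qed
  moreover have "(\<bar>c\<bar> + ln Rc + G0) * d \<le> (\<bar>c\<bar> + ln Rc + G0) * (\<epsilon> * real n)"
    using d(2) Rc G0 by (intro mult_left_mono) auto
  moreover have "(2 * real l + Rc) * (\<eta> * real m) \<le> (2 * real l + Rc) * \<eta> * (2 * real n)"
    using d(3) Rc \<eta> by (simp add: mult_left_mono)
  ultimately show ?thesis unfolding Rc_def G0_def by (simp add: algebra_simps)
qed

lemma nlog_free_partition_le:
  assumes K: "0 < K" and n: "0 < n" and z0: "z0 \<in> R - {0}"
    and \<epsilon>: "1 \<le> \<epsilon> * real n" "\<epsilon> \<le> 1" and \<eta>: "0 \<le> \<eta>"
    and ray: "\<And>m. n \<le> m \<Longrightarrow> ray_bounded R (window_mass R l \<phi>) \<epsilon> (\<eta> * real m) m"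
    and slack: "\<And>j. j \<in> PiE R (\<lambda>_. {..K}) \<Longrightarrow>
      2 * real (card R) * real n / real K + real (grid_period R b j) \<le> \<epsilon> * real n"
    and pinned: "\<And>j m. j \<in> PiE R (\<lambda>_. {..K}) \<Longrightarrow> n \<le> m \<Longrightarrow>
      nlog m (pinned_partition R l \<phi> m (xhat (grid_dir R j) m)) \<le> ereal c"
    and budget: "(\<bar>c\<bar> + ln (real (card R)) + window_mass R l \<phi> 0) * \<epsilon> \<le> \<theta> / 4"
      "(2 * real l + real (card R)) * \<eta> \<le> \<theta> / 8" "real (card R) * ln (real n + 1) \<le> \<theta> / 4 * real n"
  shows "nlog n (free_partition R l \<phi> n) \<le> ereal (c + \<theta>)"
proof -
  define A where "A = \<bar>c\<bar> + ln (real (card R)) + window_mass R l \<phi> 0"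
  have "ln (free_partition R l \<phi> n) \<le> ln (real (card (Dset R n))) + c * real n + A * \<epsilon> * real n
      + (2 * real l + real (card R)) * \<eta> * (2 * real n)"
    using ln_free_partition_le[OF K n z0 \<epsilon> \<eta> ray slack pinned] by (simp add: A_def mult.assoc)
  moreover have "ln (real (card (Dset R n))) \<le> \<theta> / 4 * real n"
    using ln_card_Dset_le[OF finite_R R_nonempty, of n] budget(3) by linarith
  moreover have "A * \<epsilon> * real n \<le> \<theta> / 4 * real n"
    using budget(1) by (intro mult_right_mono) (simp_all add: A_def)
  moreover have "(2 * real l + real (card R)) * \<eta> * (2 * real n) \<le> \<theta> / 8 * (2 * real n)"
    using budget(2) by (intro mult_right_mono) simp_all
  moreover have "\<theta> / 8 * (2 * real n) = \<theta> / 4 * real n" by simp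
  moreover have "(c + \<theta>) * real n = c * real n + \<theta> / 4 * real n * 4" by (simp add: algebra_simps)
  moreover have "0 \<le> \<theta> / 4 * real n"
  proof -
    have "0 \<le> real (card R) * ln (real n + 1)" by simp
    then show ?thesis using budget(3) by linarith
  qed
  ultimately have "ln (free_partition R l \<phi> n) \<le> (c + \<theta>) * real n" by linarith
  then show ?thesis using free_partition_pos[OF finite_R R_nonempty] n by (simp add: nlog_le_iff)
qed

lemma eventually_nlog_free_partition_le:
  assumes z0: "z0 \<in> R - {0}" and neg: "ray_negligible R l \<phi>" and \<theta>: "0 < \<theta>"
    and pinned: "\<And>\<xi>. \<xi> \<in> rat_hull R \<Longrightarrow>
      Limsup sequentially (\<lambda>n. nlog n (pinned_partition R l \<phi> n (xhat \<xi> n))) < ereal c"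
  shows "\<forall>\<^sub>F n in sequentially. nlog n (free_partition R l \<phi> n) \<le> ereal (c + \<theta>)"
proof -
  define Rc where "Rc = real (card R)"
  define Cc where "Cc = \<bar>c\<bar> + ln Rc + window_mass R l \<phi> 0"
  define S where "S = 2 * real l + Rc"
  define \<eta> where "\<eta> = \<theta> / (8 * S)"
  have Rc: "1 \<le> Rc" using finite_R R_nonempty by (simp add: Rc_def Suc_le_eq card_gt_0_iff)
  have Cc: "0 \<le> Cc" using Rc window_mass_nonneg[of R l \<phi> 0] by (simp add: Cc_def)
  have "0 < S" using Rc by (simp add: S_def)
  then have \<eta>: "0 < \<eta>" "(2 * real l + Rc) * \<eta> \<le> \<theta> / 8" using \<theta> by (simp_all add: \<eta>_def S_def[symmetric])
  obtain \<epsilon> N1 where \<epsilon>: "0 < \<epsilon>" "\<epsilon> \<le> min 1 (\<theta> / (4 * (Cc + 1)))"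
    and ray: "\<And>m. N1 \<le> m \<Longrightarrow> ray_bounded R (window_mass R l \<phi>) \<epsilon> (\<eta> * real m) m"
    using ray_negligibleD[OF finite_R R_nonempty neg \<eta>(1), of "min 1 (\<theta> / (4 * (Cc + 1)))"] \<theta> Cc by auto
  have "Cc * \<epsilon> \<le> Cc * (\<theta> / (4 * (Cc + 1)))" using \<epsilon> Cc by (intro mult_left_mono) auto
  also have "\<dots> \<le> \<theta> / 4" using Cc \<theta> by (simp add: field_simps)
  finally have Cc\<epsilon>: "Cc * \<epsilon> \<le> \<theta> / 4" .
  obtain k :: nat where "4 * Rc / \<epsilon> \<le> real k" using real_arch_simple by blast
  then obtain K :: nat where K: "0 < K" "4 * Rc \<le> \<epsilon> * real K"
    using \<epsilon> by (intro that[of "Suc k"]) (auto simp: field_simps)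
  define grid where "grid = PiE R (\<lambda>_. {..K})"
  have grid: "finite grid" using finite_R by (simp add: grid_def finite_PiE)
  have "\<forall>\<^sub>F m in sequentially. \<forall>j\<in>grid. nlog m (pinned_partition R l \<phi> m (xhat (grid_dir R j) m)) < ereal c"
    using grid_dir_in_rat_hull[OF finite_R R_nonempty]
    by (intro eventually_ball_finite[OF grid] ballI Limsup_lessD pinned)
  then obtain M0 where M0: "\<And>m j. M0 \<le> m \<Longrightarrow> j \<in> grid \<Longrightarrow>
      nlog m (pinned_partition R l \<phi> m (xhat (grid_dir R j) m)) < ereal c"
    unfolding eventually_sequentially by blast
  define Ls where "Ls = (\<Sum>j\<in>grid. real (grid_period R b j))"
  have Ls: "real (grid_period R b j) \<le> Ls" if "j \<in> grid" for j
    unfolding Ls_def using grid that by (intro member_le_sum) auto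
  have "\<forall>\<^sub>F n in sequentially. N1 \<le> n \<and> M0 \<le> n \<and> 2 * Ls / \<epsilon> \<le> real n \<and> 1 / \<epsilon> \<le> real n
      \<and> Rc * ln (real n + 1) \<le> \<theta> / 4 * real n"
    using Rc \<theta> by (intro eventually_conj eventually_ge_at_top eventually_real_ge eventually_ln_le_linear) auto
  then show ?thesis
  proof (rule eventually_mono)
    fix n assume h: "N1 \<le> n \<and> M0 \<le> n \<and> 2 * Ls / \<epsilon> \<le> real n \<and> 1 / \<epsilon> \<le> real n
      \<and> Rc * ln (real n + 1) \<le> \<theta> / 4 * real n"
    have \<epsilon>n: "1 \<le> \<epsilon> * real n" "2 * Ls \<le> \<epsilon> * real n"
      using h \<epsilon>(1) by (simp_all add: divide_le_eq mult.commute)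
    have n: "0 < n" using \<epsilon>n(1) by (cases n) auto
    have "2 * Rc * real n / real K \<le> \<epsilon> / 2 * real n"
      using mult_right_mono[OF K(2), of "real n"] K(1) by (simp add: field_simps)
    then have slack: "2 * real (card R) * real n / real K + real (grid_period R b j) \<le> \<epsilon> * real n"
      if "j \<in> PiE R (\<lambda>_. {..K})" for j
      using Ls[of j] that \<epsilon>n(2) by (simp add: grid_def Rc_def)
    show "nlog n (free_partition R l \<phi> n) \<le> ereal (c + \<theta>)"
    proof (rule nlog_free_partition_le[OF K(1) n z0 \<epsilon>n(1) _ less_imp_le[OF \<eta>(1)] _ slack])
      show "ray_bounded R (window_mass R l \<phi>) \<epsilon> (\<eta> * real m) m" if "n \<le> m" for m
        using ray h that by simp
      show "nlog m (pinned_partition R l \<phi> m (xhat (grid_dir R j) m)) \<le> ereal c"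
        if "j \<in> PiE R (\<lambda>_. {..K})" "n \<le> m" for j m
        using M0[of m j] h that by (simp add: grid_def)
    qed (use \<epsilon>(2) Cc\<epsilon> \<eta>(2) h in \<open>simp_all add: Cc_def Rc_def\<close>)
  qed
qed

lemma Limsup_free_partition_le:
  assumes neg: "ray_negligible R l \<phi>"
  shows "Limsup sequentially (\<lambda>n. nlog n (free_partition R l \<phi> n))
    \<le> (SUP \<xi>\<in>rat_hull R. Limsup sequentially (\<lambda>n. nlog n (pinned_partition R l \<phi> n (xhat \<xi> n))))"
    (is "?free \<le> ?sup")
proof (cases "R = {0}")
  case True
  have origin: "0 \<in> rat_hull R" using True by (simp add: rat_hull_def rational_vec_def rvec_zero)
  have "xhat 0 n = 0" for n
    using xhat_0[OF origin] xhat_step[OF origin] True by (induction n) auto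
  then have "?free = Limsup sequentially (\<lambda>n. nlog n (pinned_partition R l \<phi> n (xhat 0 n)))"
    using free_partition_eq_pinned_origin[OF True] by simp
  also have "\<dots> \<le> ?sup" using origin by (rule SUP_upper)
  finally show ?thesis .
next
  case False
  then obtain z0 where z0: "z0 \<in> R - {0}" using R_nonempty by auto
  show ?thesis
  proof (rule dense_ge)
    fix y assume y: "?sup < y"
    show "?free \<le> y"
    proof (cases y)
      case (real y')
      obtain w where w: "?sup < w" "w < y" using y dense by blast
      then obtain c where c: "w = ereal c" using real by (cases w) auto
      have pinned: "Limsup sequentially (\<lambda>n. nlog n (pinned_partition R l \<phi> n (xhat \<xi> n))) < ereal c"
        if "\<xi> \<in> rat_hull R" for \<xi>
        using le_less_trans[OF SUP_upper[OF that] w(1)] c by simp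
      have "0 < y' - c" using w(2) c real by simp
      from eventually_nlog_free_partition_le[OF z0 neg this pinned]
      have "?free \<le> ereal (c + (y' - c))" by (rule Limsup_bounded)
      then show ?thesis using real by simp
    qed (use y in auto)
  qed
qed

end

lemma AE_ray_negligible:
  assumes "finite R" and "classL M R T l g"
  shows "AE \<omega> in M. ray_negligible R l (\<lambda>y. g (T y \<omega>))"
proof -
  have "AE \<omega> in M. \<forall>w\<in>paths R l. \<forall>z\<in>R - {0}.
      Limsup (at_right (0::real)) (\<lambda>\<epsilon>. Limsup sequentially (\<lambda>n.
        ereal (Max ((\<lambda>x. (1 / real n) * (\<Sum>i\<in>{i::nat. real i \<le> \<epsilon> * real n}.
          \<bar>g (T (x + int i *s z) \<omega>) w\<bar>)) ` (\<Union>k\<le>n. Dset R k))))) = 0"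
  proof (intro AE_finite_allI paths_finite finite_Diff assms(1))
    fix w z assume "w \<in> paths R l" "z \<in> R - {0}"
    then show "AE \<omega> in M. Limsup (at_right (0::real)) (\<lambda>\<epsilon>. Limsup sequentially (\<lambda>n.
        ereal (Max ((\<lambda>x. (1 / real n) * (\<Sum>i\<in>{i::nat. real i \<le> \<epsilon> * real n}.
          \<bar>g (T (x + int i *s z) \<omega>) w\<bar>)) ` (\<Union>k\<le>n. Dset R k))))) = 0"
      using assms(2) unfolding classL_def classL1_def by blast
  qed
  then show ?thesis by (simp add: ray_negligible_def segment_average_def)
qed

theorem lemma2p8:
  fixes M :: "'a measure" and R :: "(int ^ 'd) set" and T :: "int ^ 'd \<Rightarrow> 'a \<Rightarrow> 'a"
    and l :: nat and g :: "'a \<Rightarrow> (int ^ 'd) list \<Rightarrow> real"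
    and b :: "real ^ 'd \<Rightarrow> nat" and xhat :: "real ^ 'd \<Rightarrow> nat \<Rightarrow> int ^ 'd"
  assumes R: "finite R" "R \<noteq> {}"
    and sys: "ergodic_system M (gen_group R) T"
    and gmeas: "\<forall>zs\<in>paths R l. (\<lambda>\<omega>. g \<omega> zs) \<in> borel_measurable M"
    and gL: "classL M R T l g"
    and bpos: "\<forall>\<xi>. rational_vec \<xi> \<and> \<xi> \<in> convex hull (rvec ` R) \<longrightarrow>
        0 < b \<xi> \<and> (\<exists>x\<in>Dset R (b \<xi>). rvec x = real (b \<xi>) *\<^sub>R \<xi>)"
    and xpath: "\<forall>\<xi>. rational_vec \<xi> \<and> \<xi> \<in> convex hull (rvec ` R) \<longrightarrow>
        xhat \<xi> 0 = 0 \<and> (\<forall>n. xhat \<xi> (Suc n) - xhat \<xi> n \<in> R) \<and>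
        (\<forall>j. rvec (xhat \<xi> (j * b \<xi>)) = real (j * b \<xi>) *\<^sub>R \<xi>)"
  shows "AE \<omega> in M.
    Limsup sequentially (\<lambda>n. nlog n (E0 R (n + l) (\<lambda>zs. exp (nRn T g l n \<omega> zs))))
    \<le> (SUP \<xi>\<in>{\<xi>. rational_vec \<xi> \<and> \<xi> \<in> convex hull (rvec ` R)}.
         Limsup sequentially (\<lambda>n. nlog n (E0 R (n + l)
           (\<lambda>zs. exp (nRn T g l n \<omega> zs) * (if walkX zs n = xhat \<xi> n then 1 else 0)))))"
proof -
  have hull: "{\<xi>. rational_vec \<xi> \<and> \<xi> \<in> convex hull (rvec ` R)} = rat_hull R"
    by (simp add: rat_hull_def)
  have energy: "nRn T g l n \<omega> zs = path_energy (\<lambda>y. g (T y \<omega>)) l n zs" for n \<omega> zs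
    by (simp add: nRn_def path_energy_def)
  have "\<xi> \<in> rat_hull R \<Longrightarrow> 0 < b \<xi>"
    and "\<xi> \<in> rat_hull R \<Longrightarrow> rvec (xhat \<xi> (i * b \<xi>)) = real (i * b \<xi>) *\<^sub>R \<xi>"
    and "\<xi> \<in> rat_hull R \<Longrightarrow> xhat \<xi> 0 = 0"
    and "\<xi> \<in> rat_hull R \<Longrightarrow> xhat \<xi> (Suc n) - xhat \<xi> n \<in> R" for \<xi> i n
    using bpos xpath by (simp_all add: rat_hull_def)
  note main = Limsup_free_partition_le[OF R this]
  have "AE \<omega> in M. Limsup sequentially (\<lambda>n. nlog n (free_partition R l (\<lambda>y. g (T y \<omega>)) n))
    \<le> (SUP \<xi>\<in>rat_hull R. Limsup sequentially (\<lambda>n. nlog n (pinned_partition R l (\<lambda>y. g (T y \<omega>)) n (xhat \<xi> n))))"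
    using AE_ray_negligible[OF R(1) gL] by (rule eventually_mono) (rule main)
  then show ?thesis by (simp add: hull energy free_partition_def pinned_partition_def)
qed

end
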